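(* Let $\preceq$ be a preorder on a set $\mathcal{X}$ and let $k\ge1$ be an integer. Let $\mathcal{F}\subseteq\{0,\dots,k\}^{\mathcal{X}}$ be a class of functions with $\mathrm{fat}^o_2(\mathcal{F},\mathcal{X})=d$. Then for any $n>d$ and any ordered $\mathcal{X}$-valued tree $\mathbf{x}$ of depth $n$, $$\mathcal{N}_\infty(\mathcal{F},1/2,\mathbf{x})\le\sum_{i=0}^d\binom ni k^i.$$ Hence, for a class $\mathcal{G}\subseteq[-1,1]^{\mathcal{X}}$, for any $\beta>0$ and any ordered $\mathcal{X}$-valued tree $\mathbf{x}$ of depth $n$, $$\mathcal{N}_\infty(\mathcal{G},\beta,\mathbf{x})\le\Big(\frac{2en}{\beta}\Big)^{\mathrm{fat}^o_\beta(\mathcal{G},\mathcal{X})}.$$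
   Context: A preorder is a reflexive, transitive binary relation. An $\mathcal{X}$-valued tree of depth $n$ is a sequence of maps $\mathbf{x}_t:\{0,1\}^{t-1}\to\mathcal{X}$, $t=1,\dots,n$, with $\mathbf{x}_t(y)=\mathbf{x}_t(y_1,\dots,y_{t-1})$ for $y\in\{0,1\}^n$. It is ordered if for every $y\in\{0,1\}^n$, $\mathbf{x}_t(y)\preceq\mathbf{x}_{t+1}(y)$ for all $t=1,\dots,n-1$. For $\mathcal{X}'\subseteq\mathcal{X}$, a class $\mathcal{F}\subseteq\mathbb{R}^{\mathcal{X}}$ shatters at scale $\beta>0$ an ordered $\mathcal{X}'$-valued tree $\mathbf{x}$ of depth $d$ if there is an $\mathbb{R}$-valued witness tree $\mathbf{s}$ of depth $d$ such that for every $y\in\{0,1\}^d$ there exists $f\in\mathcal{F}$ with $(2y_t-1)(f(\mathbf{x}_t(y))-\mathbf{s}_t(y))\ge\beta/2$ for all $t$; $\mathrm{fat}^o_\beta(\mathcal{F},\mathcal{X}')$ is the largest depth of an ordered $\mathcal{X}'$-valued tree shattered at scale $\beta$. A set $V$ of $\mathbb{R}$-valued trees of depth $n$ is a sequential $\gamma$-cover (in $\ell_\infty$) of $\mathcal{F}$ on $\mathbf{x}$ if for every $f\in\mathcal{F}$ and every $y\in\{0,1\}^n$ there is $\mathbf{v}\in V$ with $\max_t|\mathbf{v}_t(y)-f(\mathbf{x}_t(y))|\le\gamma$; $\mathcal{N}_\infty(\mathcal{F},\gamma,\mathbf{x})$ is the size of the smallest such cover. *)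

theory Defs
  imports "HOL-Analysis.Analysis" "HOL-Library.Extended_Nat"
begin

text \<open>A tree of depth n with values in type 'b is represented as a function
  x :: nat \<Rightarrow> bool list \<Rightarrow> 'b; the node at (0-based) level t < n along a path
  y \<in> {0,1}^n (a bool list of length n, True = 1) is x t (take t y), so it only
  depends on the first t bits of the path (paper: x_{t+1}(y_1,...,y_t)).\<close>

definition node :: "(nat \<Rightarrow> bool list \<Rightarrow> 'b) \<Rightarrow> nat \<Rightarrow> bool list \<Rightarrow> 'b" where
  "node x t y = x t (take t y)"

definition ordered_tree ::
  "('a \<Rightarrow> 'a \<Rightarrow> bool) \<Rightarrow> 'a set \<Rightarrow> nat \<Rightarrow> (nat \<Rightarrow> bool list \<Rightarrow> 'a) \<Rightarrow> bool" where
  "ordered_tree le X' n x \<longleftrightarrow>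
     (\<forall>y. length y = n \<longrightarrow>
        (\<forall>t<n. node x t y \<in> X') \<and>
        (\<forall>t. t + 1 < n \<longrightarrow> le (node x t y) (node x (t + 1) y)))"

definition sgn_bit :: "bool \<Rightarrow> real" where
  "sgn_bit b = (if b then 1 else -1)"

definition shatters_o ::
  "('a \<Rightarrow> real) set \<Rightarrow> real \<Rightarrow> nat \<Rightarrow> (nat \<Rightarrow> bool list \<Rightarrow> 'a) \<Rightarrow> bool" where
  "shatters_o F \<beta> d x \<longleftrightarrow>
     (\<exists>s :: nat \<Rightarrow> bool list \<Rightarrow> real.
        \<forall>y. length y = d \<longrightarrow>
          (\<exists>f\<in>F. \<forall>t<d. sgn_bit (y ! t) * (f (node x t y) - node s t y) \<ge> \<beta> / 2))"

definition fat_o ::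
  "('a \<Rightarrow> 'a \<Rightarrow> bool) \<Rightarrow> ('a \<Rightarrow> real) set \<Rightarrow> 'a set \<Rightarrow> real \<Rightarrow> enat" where
  "fat_o le F X' \<beta> = Sup {enat d | d. \<exists>x. ordered_tree le X' d x \<and> shatters_o F \<beta> d x}"

definition is_seq_cover ::
  "(nat \<Rightarrow> bool list \<Rightarrow> real) set \<Rightarrow> ('a \<Rightarrow> real) set \<Rightarrow> real \<Rightarrow> nat
     \<Rightarrow> (nat \<Rightarrow> bool list \<Rightarrow> 'a) \<Rightarrow> bool" where
  "is_seq_cover V F \<gamma> n x \<longleftrightarrow>
     (\<forall>f\<in>F. \<forall>y. length y = n \<longrightarrow>
        (\<exists>v\<in>V. \<forall>t<n. \<bar>node v t y - f (node x t y)\<bar> \<le> \<gamma>))"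

text \<open>Sequential l_infinity covering number (\<infinity> if no finite cover exists).\<close>
definition N_inf ::
  "('a \<Rightarrow> real) set \<Rightarrow> real \<Rightarrow> nat \<Rightarrow> (nat \<Rightarrow> bool list \<Rightarrow> 'a) \<Rightarrow> enat" where
  "N_inf F \<gamma> n x = Inf {enat (card V) | V. finite V \<and> is_seq_cover V F \<gamma> n x}"

end

theory Submission
  imports Defs
begin

text \<open>Split \<open>F\<close> into the level sets \<open>F\<^sub>i = {f. f(x\<^sub>1) = i}\<close> at the root \<open>x\<^sub>1\<close> of the tree.
  The subtrees take values in \<open>{z. x\<^sub>1 \<preceq> z}\<close>, so an ordered tree shattered by \<open>F\<^sub>i\<close> and one
  shattered by \<open>F\<^sub>j\<close> there can be hung below the root \<open>x\<^sub>1\<close>; if \<open>j \<ge> i + 2\<close> the witness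
  \<open>(i + j)/2\<close> at the root makes the result a tree of one more depth shattered by \<open>F\<close> at scale 2.
  Hence, if \<open>F\<close> shatters no ordered tree of depth \<open>d\<close>, all but two adjacent levels
  \<open>F\<^sub>a, F\<^sub>a\<^sub>+\<^sub>1\<close> shatter no tree of depth \<open>d - 1\<close>; the value \<open>a + 1/2\<close> covers
  \<open>F\<^sub>a \<union> F\<^sub>a\<^sub>+\<^sub>1\<close> at the root.  Covering the two subtrees recursively gives
  \<open>N(n, d) \<le> N(n - 1, d) + k N(n - 1, d - 1)\<close>, which is solved by \<open>\<Sum>\<^sub>i\<^sub>\<le>\<^sub>d (n choose i) k\<^sup>i\<close>.

  For \<open>[-1,1]\<close>-valued classes, \<open>g \<mapsto> \<lfloor>(g + 1)/\<beta>\<rfloor>\<close> maps into \<open>{0..\<lfloor>2/\<beta>\<rfloor>}\<close>; scale-2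
  shattering of the quantized class gives scale-\<open>\<beta>\<close> shattering of the original one and
  \<open>1/2\<close>-covers of the quantized class give \<open>\<beta>\<close>-covers, and the sum is at most \<open>(e k n)\<^sup>d\<close>.\<close>

definition join_tree ::
  "'b \<Rightarrow> (nat \<Rightarrow> bool list \<Rightarrow> 'b) \<Rightarrow> (nat \<Rightarrow> bool list \<Rightarrow> 'b) \<Rightarrow> nat \<Rightarrow> bool list \<Rightarrow> 'b" where
  "join_tree c l r = (\<lambda>t p. if t = 0 then c else (if hd p then r else l) (t - 1) (tl p))"

definition subtree :: "(nat \<Rightarrow> bool list \<Rightarrow> 'b) \<Rightarrow> bool \<Rightarrow> nat \<Rightarrow> bool list \<Rightarrow> 'b" where
  "subtree x b = (\<lambda>t p. x (Suc t) (b # p))"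

lemma node_0: "node x 0 y = x 0 []"
  by (simp add: node_def)

lemma node_join_tree_0 [simp]: "node (join_tree c l r) 0 y = c"
  by (simp add: node_def join_tree_def)

lemma node_join_tree_Suc [simp]:
  "node (join_tree c l r) (Suc t) (b # y) = node (if b then r else l) t y"
  by (simp add: node_def join_tree_def)

lemma node_subtree [simp]: "node (subtree x b) t y = node x (Suc t) (b # y)"
  by (simp add: node_def subtree_def)

subsection \<open>Ordered trees\<close>

lemma ordered_tree_mono: "ordered_tree le S n x \<Longrightarrow> S \<subseteq> S' \<Longrightarrow> ordered_tree le S' n x"
  unfolding ordered_tree_def by blast

lemma ordered_tree_root_le:
  assumes "reflp le" "transp le" "ordered_tree le S n x" "length y = n"
  shows "t < n \<Longrightarrow> le (x 0 []) (node x t y)"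
proof (induction t)
  case 0
  then show ?case using assms(1) by (simp add: node_0 reflpD)
next
  case (Suc t)
  then have "le (node x t y) (node x (Suc t) y)"
    using assms(3,4) unfolding ordered_tree_def by auto
  with Suc show ?case using assms(2) by (meson Suc_lessD transpD)
qed

lemma ordered_tree_root_mem: "ordered_tree le S (Suc n) x \<Longrightarrow> x 0 [] \<in> S"
  unfolding ordered_tree_def by (metis length_replicate node_0 zero_less_Suc)

lemma ordered_tree_subtree:
  assumes "reflp le" "transp le" "ordered_tree le S (Suc n) x"
  shows "ordered_tree le {z \<in> S. le (x 0 []) z} n (subtree x b)"
  unfolding ordered_tree_def
proof (intro allI impI conjI)
  fix y :: "bool list" and t assume y: "length y = n"
  then have y': "length (b # y) = Suc n" by simp
  show "t < n \<Longrightarrow> node (subtree x b) t y \<in> {z \<in> S. le (x 0 []) z}"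
    using assms(3) ordered_tree_root_le[OF assms y', of "Suc t"] y'
    unfolding ordered_tree_def by auto
  show "t + 1 < n \<Longrightarrow> le (node (subtree x b) t y) (node (subtree x b) (t + 1) y)"
    using assms(3) y' unfolding ordered_tree_def by auto
qed

lemma ordered_tree_join_tree:
  assumes "ordered_tree le {z \<in> S. le c z} n l" "ordered_tree le {z \<in> S. le c z} n r" "c \<in> S"
  shows "ordered_tree le S (Suc n) (join_tree c l r)"
  unfolding ordered_tree_def
proof (intro allI impI conjI)
  fix y :: "bool list" and t assume "length y = Suc n"
  then obtain b y' where y: "y = b # y'" "length y' = n" by (cases y) auto
  have sub: "ordered_tree le {z \<in> S. le c z} n (if b then r else l)"
    using assms by simp
  show "t < Suc n \<Longrightarrow> node (join_tree c l r) t y \<in> S"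
    using sub assms(3) y unfolding ordered_tree_def by (cases t) auto
  show "t + 1 < Suc n \<Longrightarrow> le (node (join_tree c l r) t y) (node (join_tree c l r) (t + 1) y)"
    using sub y unfolding ordered_tree_def by (cases t) auto
qed

subsection \<open>Shattering\<close>

lemma shatters_o_mono: "shatters_o F \<beta> d x \<Longrightarrow> F \<subseteq> F' \<Longrightarrow> shatters_o F' \<beta> d x"
  unfolding shatters_o_def by blast

lemma shatters_o_join_tree:
  assumes "shatters_o A \<beta> n l" "shatters_o B \<beta> n r"
    and "\<forall>f\<in>A. f c \<le> s - \<beta> / 2" "\<forall>f\<in>B. s + \<beta> / 2 \<le> f c"
  shows "shatters_o (A \<union> B) \<beta> (Suc n) (join_tree c l r)"
proof -
  obtain wl where wl: "\<forall>y. length y = n \<longrightarrow>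
      (\<exists>f\<in>A. \<forall>t<n. \<beta> / 2 \<le> sgn_bit (y ! t) * (f (node l t y) - node wl t y))"
    using assms(1) unfolding shatters_o_def by blast
  obtain wr where wr: "\<forall>y. length y = n \<longrightarrow>
      (\<exists>f\<in>B. \<forall>t<n. \<beta> / 2 \<le> sgn_bit (y ! t) * (f (node r t y) - node wr t y))"
    using assms(2) unfolding shatters_o_def by blast
  show ?thesis
    unfolding shatters_o_def
  proof (intro exI[of _ "join_tree s wl wr"] allI impI)
    fix y :: "bool list" assume "length y = Suc n"
    then obtain b y' where y: "y = b # y'" "length y' = n" by (cases y) auto
    obtain f where f: "f \<in> (if b then B else A)" and
      below: "\<forall>t<n. \<beta> / 2 \<le> sgn_bit (y' ! t) *
        (f (node (if b then r else l) t y') - node (if b then wr else wl) t y')"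
      using wl wr y(2) by (cases b) auto
    have root: "\<beta> / 2 \<le> sgn_bit b * (f c - s)"
      using f assms(3,4) by (cases b) (auto simp: sgn_bit_def)
    have "\<forall>t<Suc n. \<beta> / 2 \<le> sgn_bit (y ! t) *
        (f (node (join_tree c l r) t y) - node (join_tree s wl wr) t y)"
      using root below y by (auto simp: less_Suc_eq_0_disj)
    moreover have "f \<in> A \<union> B" using f by (auto split: if_splits)
    ultimately show "\<exists>f\<in>A \<union> B. \<forall>t<Suc n. \<beta> / 2 \<le> sgn_bit (y ! t) *
        (f (node (join_tree c l r) t y) - node (join_tree s wl wr) t y)" by blast
  qed
qed

lemma shatters_o_scale_le_2:
  assumes "\<forall>g\<in>G. \<forall>a. g a \<in> {-1..1}" "shatters_o G \<beta> d z" "0 < d"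
  shows "\<beta> \<le> 2"
proof -
  obtain s where s: "\<forall>y. length y = d \<longrightarrow>
      (\<exists>f\<in>G. \<forall>t<d. \<beta> / 2 \<le> sgn_bit (y ! t) * (f (node z t y) - node s t y))"
    using assms(2) unfolding shatters_o_def by blast
  have "\<exists>f\<in>G. \<beta> / 2 \<le> sgn_bit b * (f (z 0 []) - s 0 [])" for b
  proof -
    obtain f where "f \<in> G" "\<forall>t<d. \<beta> / 2 \<le> sgn_bit (replicate d b ! t) *
        (f (node z t (replicate d b)) - node s t (replicate d b))"
      using s by (metis length_replicate)
    then show ?thesis using assms(3) by (metis node_0 nth_replicate)
  qed
  then obtain g0 g1 where "g0 \<in> G" "\<beta> / 2 \<le> sgn_bit False * (g0 (z 0 []) - s 0 [])"
    and "g1 \<in> G" "\<beta> / 2 \<le> sgn_bit True * (g1 (z 0 []) - s 0 [])"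
    by blast
  moreover have "-1 \<le> g0 (z 0 [])" "g1 (z 0 []) \<le> 1"
    using assms(1) \<open>g0 \<in> G\<close> \<open>g1 \<in> G\<close> by auto
  ultimately show ?thesis by (simp add: sgn_bit_def)
qed

definition shatters_ordered_tree ::
  "('a \<Rightarrow> 'a \<Rightarrow> bool) \<Rightarrow> 'a set \<Rightarrow> ('a \<Rightarrow> real) set \<Rightarrow> real \<Rightarrow> nat \<Rightarrow> bool" where
  "shatters_ordered_tree le S F \<beta> d \<longleftrightarrow> (\<exists>x. ordered_tree le S d x \<and> shatters_o F \<beta> d x)"

lemma shatters_ordered_tree_0_iff: "shatters_ordered_tree le S F \<beta> 0 \<longleftrightarrow> F \<noteq> {}"
  by (auto simp: shatters_ordered_tree_def ordered_tree_def shatters_o_def)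

lemma shatters_ordered_tree_mono:
  "shatters_ordered_tree le S F \<beta> d \<Longrightarrow> S \<subseteq> S' \<Longrightarrow> F \<subseteq> F'
    \<Longrightarrow> shatters_ordered_tree le S' F' \<beta> d"
  unfolding shatters_ordered_tree_def by (meson ordered_tree_mono shatters_o_mono)

lemma shatters_ordered_tree_join:
  assumes "shatters_ordered_tree le {z \<in> S. le c z} A \<beta> n"
    and "shatters_ordered_tree le {z \<in> S. le c z} B \<beta> n" and "c \<in> S"
    and "\<forall>f\<in>A. f c \<le> s - \<beta> / 2" "\<forall>f\<in>B. s + \<beta> / 2 \<le> f c"
  shows "shatters_ordered_tree le S (A \<union> B) \<beta> (Suc n)"
proof -
  obtain l r where l: "ordered_tree le {z \<in> S. le c z} n l" "shatters_o A \<beta> n l"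
    and r: "ordered_tree le {z \<in> S. le c z} n r" "shatters_o B \<beta> n r"
    using assms(1,2) unfolding shatters_ordered_tree_def by blast
  show ?thesis
    unfolding shatters_ordered_tree_def
    using ordered_tree_join_tree[OF l(1) r(1) assms(3)] shatters_o_join_tree[OF l(2) r(2) assms(4,5)]
    by blast
qed

lemma shatters_ordered_tree_levels:
  assumes "shatters_ordered_tree le {z \<in> S. le c z} {f \<in> F. f c = real i} 2 n"
    and "shatters_ordered_tree le {z \<in> S. le c z} {f \<in> F. f c = real j} 2 n"
    and "c \<in> S" "i + 2 \<le> j"
  shows "shatters_ordered_tree le S F 2 (Suc n)"
proof -
  have "real i + 2 \<le> real j" using assms(4) by linarith
  then have "shatters_ordered_tree le S ({f \<in> F. f c = real i} \<union> {f \<in> F. f c = real j}) 2 (Suc n)"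
    using assms(1-3)
    by (intro shatters_ordered_tree_join[where s = "(real i + real j) / 2"]) (auto simp: field_simps)
  then show ?thesis by (rule shatters_ordered_tree_mono) auto
qed

lemma fat_o_eq_imp_not_shatters:
  assumes "fat_o le F S \<beta> = enat d"
  shows "\<not> shatters_ordered_tree le S F \<beta> (Suc d)"
proof
  assume "shatters_ordered_tree le S F \<beta> (Suc d)"
  then have "enat (Suc d) \<le> fat_o le F S \<beta>"
    unfolding fat_o_def shatters_ordered_tree_def by (intro Sup_upper) blast
  with assms show False by simp
qed

lemma fat_o_eq_0_if_scale_gt_2:
  assumes "\<forall>g\<in>G. \<forall>a. g a \<in> {-1..1}" "2 < \<beta>"
  shows "fat_o le G S \<beta> = 0"
proof -
  have "d = 0" if "shatters_o G \<beta> d x" for d x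
    using shatters_o_scale_le_2[OF assms(1) that] assms(2) by fastforce
  then show ?thesis
    unfolding fat_o_def by (intro order.antisym Sup_least) (auto simp: enat_0_iff)
qed

subsection \<open>Sequential covers\<close>

definition has_seq_cover ::
  "('a \<Rightarrow> real) set \<Rightarrow> real \<Rightarrow> nat \<Rightarrow> (nat \<Rightarrow> bool list \<Rightarrow> 'a) \<Rightarrow> nat \<Rightarrow> bool" where
  "has_seq_cover F \<gamma> n x m \<longleftrightarrow> (\<exists>V. finite V \<and> card V \<le> m \<and> is_seq_cover V F \<gamma> n x)"

lemma N_inf_le_if_has_seq_cover:
  assumes "has_seq_cover F \<gamma> n x m"
  shows "\<exists>m'. N_inf F \<gamma> n x = enat m' \<and> m' \<le> m"
proof -
  define A where "A = {enat (card V) | V. finite V \<and> is_seq_cover V F \<gamma> n x}"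
  obtain V where V: "finite V" "card V \<le> m" "is_seq_cover V F \<gamma> n x"
    using assms unfolding has_seq_cover_def by blast
  then have inA: "enat (card V) \<in> A" unfolding A_def by blast
  have "Inf A \<in> A" unfolding Inf_enat_def using inA by (auto intro: LeastI)
  then obtain m' where m': "Inf A = enat m'" unfolding A_def by blast
  have "Inf A \<le> enat (card V)" using inA by (rule Inf_lower)
  then show ?thesis using m' V(2) unfolding N_inf_def A_def[symmetric] by auto
qed

lemma has_seq_cover_mono: "has_seq_cover F \<gamma> n x m \<Longrightarrow> m \<le> m' \<Longrightarrow> has_seq_cover F \<gamma> n x m'"
  unfolding has_seq_cover_def by auto

lemma has_seq_cover_empty: "has_seq_cover {} \<gamma> n x m"
  unfolding has_seq_cover_def is_seq_cover_def by (intro exI[of _ "{}"]) auto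

lemma has_seq_cover_depth_0: "has_seq_cover F \<gamma> 0 x 1"
  unfolding has_seq_cover_def is_seq_cover_def by (intro exI[of _ "{\<lambda>_ _. 0}"]) auto

lemma has_seq_cover_Un:
  assumes "has_seq_cover A \<gamma> n x m1" "has_seq_cover B \<gamma> n x m2"
  shows "has_seq_cover (A \<union> B) \<gamma> n x (m1 + m2)"
proof -
  obtain V1 V2 where "finite V1" "card V1 \<le> m1" "is_seq_cover V1 A \<gamma> n x"
    "finite V2" "card V2 \<le> m2" "is_seq_cover V2 B \<gamma> n x"
    using assms unfolding has_seq_cover_def by blast
  then show ?thesis
    unfolding has_seq_cover_def is_seq_cover_def
    by (intro exI[of _ "V1 \<union> V2"]) (auto intro: order.trans[OF card_Un_le]; blast)
qed

lemma has_seq_cover_UN: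
  "finite I \<Longrightarrow> (\<And>i. i \<in> I \<Longrightarrow> has_seq_cover (F i) \<gamma> n x m)
    \<Longrightarrow> has_seq_cover (\<Union>i\<in>I. F i) \<gamma> n x (card I * m)"
proof (induction I rule: finite_induct)
  case empty
  then show ?case by (simp add: has_seq_cover_empty)
next
  case (insert i I)
  then show ?case using has_seq_cover_Un[of "F i" \<gamma> n x m] by simp
qed

lemma is_seq_cover_nonempty: "is_seq_cover V F \<gamma> n x \<Longrightarrow> F \<noteq> {} \<Longrightarrow> V \<noteq> {}"
  unfolding is_seq_cover_def by (metis all_not_in_conv length_replicate)

lemma finite_eq_image_lessThan:
  assumes "finite A" "A \<noteq> {}" "card A \<le> m"
  obtains p where "A = p ` {..<m}"
proof -
  obtain h where h: "bij_betw h {0..<card A} A" using ex_bij_betw_nat_finite[OF assms(1)] by blast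
  define p where "p i = h (min i (card A - 1))" for i
  have "card A > 0" using assms by auto
  then have "p ` {..<m} \<subseteq> A" using h unfolding p_def bij_betw_def by auto
  moreover have "A \<subseteq> p ` {..<m}"
  proof
    fix a assume "a \<in> A"
    then have "a \<in> h ` {0..<card A}" using h by (simp add: bij_betw_def)
    then obtain j where "j < card A" "a = h j" by auto
    then show "a \<in> p ` {..<m}" using assms(3) unfolding p_def by (intro image_eqI[of _ _ j]) auto
  qed
  ultimately show ?thesis using that by blast
qed

text \<open>The two subtree covers are paired up through enumerations of equal length, so that
  joining them under a common root value does not multiply their sizes.\<close>

lemma has_seq_cover_join_tree:
  assumes "has_seq_cover H \<gamma> n (subtree x False) m" "has_seq_cover H \<gamma> n (subtree x True) m"
    and "\<forall>f\<in>H. \<bar>c - f (x 0 [])\<bar> \<le> \<gamma>"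
  shows "has_seq_cover H \<gamma> (Suc n) x m"
proof (cases "H = {}")
  case True
  then show ?thesis by (simp add: has_seq_cover_empty)
next
  case False
  have enum: "\<exists>p. is_seq_cover (p ` {..<m}) H \<gamma> n (subtree x b)" for b
  proof -
    have "has_seq_cover H \<gamma> n (subtree x b) m" using assms(1,2) by (cases b) simp_all
    then obtain V where V: "finite V" "card V \<le> m" "is_seq_cover V H \<gamma> n (subtree x b)"
      unfolding has_seq_cover_def by blast
    then have "V \<noteq> {}" using False is_seq_cover_nonempty by blast
    then obtain p where "V = p ` {..<m}" by (rule finite_eq_image_lessThan[OF V(1) _ V(2)])
    then show ?thesis using V(3) by blast
  qed
  obtain pl pr where pl: "is_seq_cover (pl ` {..<m}) H \<gamma> n (subtree x False)"
    and pr: "is_seq_cover (pr ` {..<m}) H \<gamma> n (subtree x True)"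
    using enum by blast
  let ?V = "(\<lambda>i. join_tree c (pl i) (pr i)) ` {..<m}"
  have "is_seq_cover ?V H \<gamma> (Suc n) x"
    unfolding is_seq_cover_def
  proof (intro ballI allI impI)
    fix f and y :: "bool list" assume f: "f \<in> H" and "length y = Suc n"
    then obtain b y' where y: "y = b # y'" "length y' = n" by (cases y) auto
    have "\<exists>i<m. \<forall>t<n.
        \<bar>node (if b then pr i else pl i) t y' - f (node x (Suc t) (b # y'))\<bar> \<le> \<gamma>"
      using pl[unfolded is_seq_cover_def, rule_format, OF f y(2)]
        pr[unfolded is_seq_cover_def, rule_format, OF f y(2)]
      by (cases b) auto
    then obtain i where i: "i < m" and below: "\<forall>t<n.
        \<bar>node (if b then pr i else pl i) t y' - f (node x (Suc t) (b # y'))\<bar> \<le> \<gamma>"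
      by blast
    have "\<forall>t<Suc n. \<bar>node (join_tree c (pl i) (pr i)) t y - f (node x t y)\<bar> \<le> \<gamma>"
      using below assms(3) f y by (auto simp: less_Suc_eq_0_disj node_0[of x])
    then show "\<exists>v\<in>?V. \<forall>t<Suc n. \<bar>node v t y - f (node x t y)\<bar> \<le> \<gamma>"
      using i by blast
  qed
  moreover have "card ?V \<le> m"
    using card_image_le[of "{..<m}" "\<lambda>i. join_tree c (pl i) (pr i)"] by simp
  ultimately show ?thesis
    unfolding has_seq_cover_def by blast
qed

lemma has_seq_cover_by_root_levels:
  assumes vals: "\<forall>f\<in>F. \<forall>a. f a \<in> of_nat ` {0..k}" and "a \<le> k"
    and pair: "has_seq_cover {f \<in> F. f c = real a \<or> f c = real (Suc a)} \<gamma> n x m"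
    and others: "\<And>i. i \<le> k \<Longrightarrow> i \<noteq> a \<Longrightarrow> i \<noteq> Suc a
      \<Longrightarrow> has_seq_cover {f \<in> F. f c = real i} \<gamma> n x m'"
  shows "has_seq_cover F \<gamma> n x (m + k * m')"
proof -
  define I where "I = {0..k} - {a, Suc a}"
  have decomp: "F = {f \<in> F. f c = real a \<or> f c = real (Suc a)} \<union> (\<Union>i\<in>I. {f \<in> F. f c = real i})"
  proof (intro equalityI subsetI)
    fix f assume "f \<in> F"
    moreover obtain i where "i \<le> k" "f c = real i" using vals \<open>f \<in> F\<close> by force
    ultimately show "f \<in> {f \<in> F. f c = real a \<or> f c = real (Suc a)} \<union> (\<Union>i\<in>I. {f \<in> F. f c = real i})"
      unfolding I_def by auto
  qed auto
  have "has_seq_cover (\<Union>i\<in>I. {f \<in> F. f c = real i}) \<gamma> n x (card I * m')"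
    using others unfolding I_def by (intro has_seq_cover_UN) auto
  then have "has_seq_cover F \<gamma> n x (m + card I * m')"
    by (subst decomp) (rule has_seq_cover_Un[OF pair])
  moreover have "card I \<le> k"
  proof -
    have "card I \<le> card ({0..k} - {a})" unfolding I_def by (intro card_mono) auto
    then show ?thesis using \<open>a \<le> k\<close> by simp
  qed
  ultimately show ?thesis by (elim has_seq_cover_mono) simp
qed

subsection \<open>The combinatorial bound\<close>

definition sauer_sum :: "nat \<Rightarrow> nat \<Rightarrow> nat \<Rightarrow> nat" where
  "sauer_sum k D n = (\<Sum>i<D. (n choose i) * k ^ i)"

lemma sauer_sum_0 [simp]: "sauer_sum k (Suc D) 0 = 1"
  unfolding sauer_sum_def by (subst sum.lessThan_Suc_shift) simp

lemma sauer_sum_Suc: "sauer_sum k (Suc D) (Suc n) = sauer_sum k (Suc D) n + k * sauer_sum k D n"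
proof -
  have "sauer_sum k (Suc D) (Suc n) =
      1 + (\<Sum>i<D. (n choose Suc i) * k ^ Suc i) + (\<Sum>i<D. (n choose i) * k ^ Suc i)"
    unfolding sauer_sum_def by (subst sum.lessThan_Suc_shift) (simp add: sum.distrib algebra_simps)
  also have "1 + (\<Sum>i<D. (n choose Suc i) * k ^ Suc i) = sauer_sum k (Suc D) n"
    unfolding sauer_sum_def by (subst sum.lessThan_Suc_shift) simp
  also have "(\<Sum>i<D. (n choose i) * k ^ Suc i) = k * sauer_sum k D n"
    unfolding sauer_sum_def by (simp add: sum_distrib_left algebra_simps)
  finally show ?thesis .
qed

lemma obtain_adjacent_pair:
  assumes "\<And>i j. P i \<Longrightarrow> P j \<Longrightarrow> \<not> i + 2 \<le> j"
  obtains a :: nat where "a \<le> k" "\<And>i. i \<le> k \<Longrightarrow> P i \<Longrightarrow> i = a \<or> i = Suc a"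
proof (cases "\<exists>i\<le>k. P i")
  case True
  then obtain i0 where "i0 \<le> k" "P i0" by blast
  then have "(LEAST i. P i) \<le> k" "P (LEAST i. P i)"
    by (auto intro: LeastI Least_le order.trans)
  moreover have "i = (LEAST i. P i) \<or> i = Suc (LEAST i. P i)" if "P i" for i
    using assms[OF \<open>P (LEAST i. P i)\<close> that] Least_le[of P i] that by linarith
  ultimately show ?thesis using that by blast
next
  case False
  then show ?thesis using that[of 0] by blast
qed

lemma has_seq_cover_sauer_sum:
  assumes "reflp le" "transp le"
  shows "ordered_tree le S n x \<Longrightarrow> \<forall>f\<in>F. \<forall>a. f a \<in> of_nat ` {0..k}
    \<Longrightarrow> \<not> shatters_ordered_tree le S F 2 D \<Longrightarrow> has_seq_cover F (1/2) n x (sauer_sum k D n)"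
proof (induction n arbitrary: D S x F)
  case 0
  then show ?case
    using has_seq_cover_depth_0[of F "1/2" x]
    by (cases D) (auto simp: shatters_ordered_tree_0_iff has_seq_cover_empty)
next
  case (Suc n)
  note ord = Suc.prems(1) and vals = Suc.prems(2) and not_shattered = Suc.prems(3)
  show ?case
  proof (cases "F = {}")
    case True
    then show ?thesis by (simp add: has_seq_cover_empty)
  next
    case False
    then obtain D' where D: "D = Suc D'"
      using not_shattered by (cases D) (auto simp: shatters_ordered_tree_0_iff)
    define c where "c = x 0 []"
    define S' where "S' = {z \<in> S. le c z}"
    have c: "c \<in> S" using ordered_tree_root_mem[OF ord] unfolding c_def .
    have cover: "has_seq_cover H (1/2) (Suc n) x (sauer_sum k E n)"
      if "H \<subseteq> F" "\<not> shatters_ordered_tree le S' H 2 E" "\<forall>f\<in>H. \<bar>r - f c\<bar> \<le> 1/2" for H E r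
    proof (rule has_seq_cover_join_tree)
      have "ordered_tree le S' n (subtree x b)" for b
        using ordered_tree_subtree[OF assms ord] unfolding S'_def c_def .
      then show "has_seq_cover H (1/2) n (subtree x False) (sauer_sum k E n)"
        and "has_seq_cover H (1/2) n (subtree x True) (sauer_sum k E n)"
        using Suc.IH that(1,2) vals by blast+
      show "\<forall>f\<in>H. \<bar>r - f (x 0 [])\<bar> \<le> 1/2" using that(3) unfolding c_def .
    qed
    have not_shattered_above_root: "\<not> shatters_ordered_tree le S' H 2 (Suc D')" if "H \<subseteq> F" for H
      using not_shattered shatters_ordered_tree_mono[of le S' H 2 D S F] that unfolding D S'_def by blast
    let ?big = "\<lambda>i. shatters_ordered_tree le S' {f \<in> F. f c = real i} 2 D'"
    have far_apart: "\<not> i + 2 \<le> j" if "?big i" "?big j" for i j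
      using shatters_ordered_tree_levels[OF that[unfolded S'_def] c] not_shattered unfolding D by blast
    obtain a where a: "a \<le> k" "\<And>i. i \<le> k \<Longrightarrow> ?big i \<Longrightarrow> i = a \<or> i = Suc a"
      using obtain_adjacent_pair[of ?big k, OF far_apart] by blast
    have "has_seq_cover {f \<in> F. f c = real a \<or> f c = real (Suc a)} (1/2) (Suc n) x
        (sauer_sum k (Suc D') n)"
      using not_shattered_above_root[of "{f \<in> F. f c = real a \<or> f c = real (Suc a)}"]
      by (intro cover[where r = "real a + 1/2"]) auto
    moreover have "has_seq_cover {f \<in> F. f c = real i} (1/2) (Suc n) x (sauer_sum k D' n)"
      if "i \<le> k" "i \<noteq> a" "i \<noteq> Suc a" for i
      using a(2)[OF that(1)] that by (intro cover[where r = "real i"]) auto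
    ultimately show ?thesis
      unfolding D sauer_sum_Suc by (rule has_seq_cover_by_root_levels[OF vals a(1)])
  qed
qed

lemma N_inf_le_sauer_sum:
  assumes "reflp le" "transp le" "ordered_tree le S n x" "\<forall>f\<in>F. \<forall>a. f a \<in> of_nat ` {0..k}"
    and "fat_o le F S 2 = enat d"
  shows "\<exists>m. N_inf F (1/2) n x = enat m \<and> m \<le> sauer_sum k (Suc d) n"
  using has_seq_cover_sauer_sum[OF assms(1-4) fat_o_eq_imp_not_shatters[OF assms(5)]]
  by (rule N_inf_le_if_has_seq_cover)

lemma sum_inverse_fact_le_exp_1: "(\<Sum>i<m. 1 / fact i) \<le> (exp 1 :: real)"
  using summable_exp_generic[of "1::real"]
  by (auto simp: exp_def divide_inverse ac_simps intro!: sum_le_suminf)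

lemma sauer_sum_le_exp:
  assumes "1 \<le> k" "1 \<le> n"
  shows "real (sauer_sum k (Suc d) n) \<le> (exp 1 * real k * real n) ^ d"
proof -
  have kn: "1 \<le> real k * real n"
    using assms mult_mono[of 1 "real k" 1 "real n"] by simp
  have "real (sauer_sum k (Suc d) n) = (\<Sum>i<Suc d. real (n choose i) * real k ^ i)"
    unfolding sauer_sum_def by simp
  also have "\<dots> \<le> (\<Sum>i<Suc d. (real k * real n) ^ d / fact i)"
  proof (rule sum_mono)
    fix i assume i: "i \<in> {..<Suc d}"
    have "real (n choose i) * fact i \<le> real n ^ i"
      using binomial_fact_pow[of n i] by (metis of_nat_fact of_nat_le_iff of_nat_mult of_nat_power)
    then have "real (n choose i) \<le> real n ^ i / fact i"
      by (simp add: field_simps)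
    then have "real (n choose i) * real k ^ i \<le> real n ^ i / fact i * real k ^ i"
      by (rule mult_right_mono) simp
    also have "\<dots> = (real k * real n) ^ i / fact i"
      by (simp add: power_mult_distrib)
    also have "\<dots> \<le> (real k * real n) ^ d / fact i"
      using i kn by (intro divide_right_mono power_increasing) auto
    finally show "real (n choose i) * real k ^ i \<le> (real k * real n) ^ d / fact i" .
  qed
  also have "\<dots> = (real k * real n) ^ d * (\<Sum>i<Suc d. 1 / fact i)"
    unfolding sum_distrib_left by (rule sum.cong) auto
  also have "\<dots> \<le> (real k * real n) ^ d * exp 1 ^ d"
  proof (cases "d = 0")
    case False
    have "(\<Sum>i<Suc d. 1 / fact i) \<le> exp (1::real) ^ 1"
      using sum_inverse_fact_le_exp_1[of "Suc d"] by (simp only: power_one_right)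
    also have "\<dots> \<le> exp 1 ^ d" using False by (intro power_increasing) auto
    finally show ?thesis using kn by (intro mult_left_mono) auto
  qed simp
  finally show ?thesis by (simp add: power_mult_distrib mult_ac)
qed

subsection \<open>Quantization\<close>

definition quantize :: "real \<Rightarrow> real \<Rightarrow> nat" where
  "quantize \<beta> w = nat \<lfloor>(w + 1) / \<beta>\<rfloor>"

definition dequantize :: "real \<Rightarrow> real \<Rightarrow> real" where
  "dequantize \<beta> u = \<beta> * u - 1 + \<beta> / 2"

lemma quantize_bounds:
  assumes "0 < \<beta>" "-1 \<le> w"
  shows "\<beta> * real (quantize \<beta> w) - 1 \<le> w" "w < \<beta> * real (quantize \<beta> w) - 1 + \<beta>"
proof -
  have q: "real (quantize \<beta> w) = of_int \<lfloor>(w + 1) / \<beta>\<rfloor>"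
    using assms unfolding quantize_def by simp
  have "\<beta> * of_int \<lfloor>(w + 1) / \<beta>\<rfloor> \<le> w + 1"
    using assms(1) of_int_floor_le by (metis mult.commute pos_le_divide_eq)
  moreover have "w + 1 < \<beta> * (of_int \<lfloor>(w + 1) / \<beta>\<rfloor> + 1)"
    using assms(1) real_of_int_floor_add_one_gt by (metis mult.commute pos_divide_less_eq)
  ultimately show "\<beta> * real (quantize \<beta> w) - 1 \<le> w" "w < \<beta> * real (quantize \<beta> w) - 1 + \<beta>"
    unfolding q by (simp_all add: algebra_simps)
qed

lemma quantize_le: "0 < \<beta> \<Longrightarrow> w \<le> 1 \<Longrightarrow> quantize \<beta> w \<le> nat \<lfloor>2 / \<beta>\<rfloor>"
  unfolding quantize_def by (intro nat_mono floor_mono divide_right_mono) auto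

lemma sgn_bit_dequantize:
  assumes "0 < \<beta>" "-1 \<le> w" "1 \<le> sgn_bit b * (real (quantize \<beta> w) - c)"
  shows "\<beta> / 2 \<le> sgn_bit b * (w - dequantize \<beta> c)"
proof -
  have "\<beta> \<le> \<beta> * (sgn_bit b * (real (quantize \<beta> w) - c))"
    using assms by (metis mult.right_neutral mult_left_mono less_imp_le)
  with quantize_bounds[OF assms(1,2)] show ?thesis
    unfolding dequantize_def sgn_bit_def by (cases b) (auto simp: algebra_simps)
qed

lemma dist_dequantize:
  assumes "0 < \<beta>" "-1 \<le> w" "\<bar>v - real (quantize \<beta> w)\<bar> \<le> 1/2"
  shows "\<bar>dequantize \<beta> v - w\<bar> \<le> \<beta>"
proof -
  have "\<bar>\<beta> * v - \<beta> * real (quantize \<beta> w)\<bar> \<le> \<beta> / 2"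
    using assms mult_left_mono[OF assms(3), of \<beta>] by (simp add: abs_mult right_diff_distrib[symmetric])
  with quantize_bounds[OF assms(1,2)] show ?thesis
    unfolding dequantize_def abs_le_iff by linarith
qed

lemma shatters_o_quantize:
  assumes "0 < \<beta>" "\<forall>g\<in>G. \<forall>a. -1 \<le> g a"
    and "shatters_o ((\<lambda>g a. real (quantize \<beta> (g a))) ` G) 2 d z"
  shows "shatters_o G \<beta> d z"
proof -
  obtain s where s: "\<forall>y. length y = d \<longrightarrow> (\<exists>g\<in>G. \<forall>t<d.
      1 \<le> sgn_bit (y ! t) * (real (quantize \<beta> (g (node z t y))) - node s t y))"
    using assms(3) unfolding shatters_o_def by auto
  let ?s = "\<lambda>t p. dequantize \<beta> (s t p)"
  have node_s: "node ?s t y = dequantize \<beta> (node s t y)" for t y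
    by (simp add: node_def)
  show ?thesis
    unfolding shatters_o_def
  proof (intro exI[of _ ?s] allI impI)
    fix y :: "bool list" assume "length y = d"
    then obtain g where g: "g \<in> G" "\<forall>t<d.
        1 \<le> sgn_bit (y ! t) * (real (quantize \<beta> (g (node z t y))) - node s t y)"
      using s by blast
    then have "\<forall>t<d. \<beta> / 2 \<le> sgn_bit (y ! t) * (g (node z t y) - node ?s t y)"
      unfolding node_s using assms(1,2) sgn_bit_dequantize by blast
    with g(1) show "\<exists>g\<in>G. \<forall>t<d. \<beta> / 2 \<le> sgn_bit (y ! t) * (g (node z t y) - node ?s t y)"
      by blast
  qed
qed

lemma has_seq_cover_dequantize:
  assumes "0 < \<beta>" "\<forall>g\<in>G. \<forall>a. -1 \<le> g a"
    and "has_seq_cover ((\<lambda>g a. real (quantize \<beta> (g a))) ` G) (1/2) n z m"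
  shows "has_seq_cover G \<beta> n z m"
proof -
  obtain V where V: "finite V" "card V \<le> m"
    and cover: "is_seq_cover V ((\<lambda>g a. real (quantize \<beta> (g a))) ` G) (1/2) n z"
    using assms(3) unfolding has_seq_cover_def by blast
  let ?deq = "\<lambda>v t p. dequantize \<beta> (v t p)"
  have node_deq: "node (?deq v) t y = dequantize \<beta> (node v t y)" for v t y
    by (simp add: node_def)
  have "is_seq_cover (?deq ` V) G \<beta> n z"
    unfolding is_seq_cover_def
  proof (intro ballI allI impI)
    fix g and y :: "bool list" assume g: "g \<in> G" and y: "length y = n"
    obtain v where v: "v \<in> V"
      "\<forall>t<n. \<bar>node v t y - real (quantize \<beta> (g (node z t y)))\<bar> \<le> 1/2"
      using cover[unfolded is_seq_cover_def, rule_format, OF imageI[OF g] y] by blast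
    then have "\<forall>t<n. \<bar>node (?deq v) t y - g (node z t y)\<bar> \<le> \<beta>"
      unfolding node_deq using assms(1,2) g dist_dequantize by blast
    with v(1) show "\<exists>v\<in>?deq ` V. \<forall>t<n. \<bar>node v t y - g (node z t y)\<bar> \<le> \<beta>"
      by blast
  qed
  moreover have "card (?deq ` V) \<le> m" using card_image_le[OF V(1), of ?deq] V(2) by linarith
  ultimately show ?thesis using V(1) unfolding has_seq_cover_def by blast
qed

lemma sauer_sum_le_scale_power:
  assumes "0 < \<beta>" "\<beta> \<le> 2" "1 \<le> n"
  shows "real (sauer_sum (nat \<lfloor>2 / \<beta>\<rfloor>) (Suc d) n) \<le> (2 * exp 1 * real n / \<beta>) ^ d"
proof -
  define k where "k = nat \<lfloor>2 / \<beta>\<rfloor>"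
  have "1 \<le> k" "real k \<le> 2 / \<beta>" using assms(1,2) unfolding k_def by (simp_all add: le_nat_floor)
  then have "real (sauer_sum k (Suc d) n) \<le> (exp 1 * real k * real n) ^ d"
    using sauer_sum_le_exp assms(3) by blast
  also have "\<dots> \<le> (2 * exp 1 * real n / \<beta>) ^ d"
  proof (rule power_mono)
    have "exp 1 * real k * real n \<le> exp 1 * (2 / \<beta>) * real n"
      using \<open>real k \<le> 2 / \<beta>\<close> by (intro mult_right_mono mult_left_mono) auto
    then show "exp 1 * real k * real n \<le> 2 * exp 1 * real n / \<beta>" by (simp add: mult_ac)
  qed simp
  finally show ?thesis unfolding k_def .
qed

lemma N_inf_le_fat_o_power:
  assumes "reflp le" "transp le" "\<forall>g\<in>G. \<forall>a. g a \<in> {-1..1}" "0 < \<beta>" "1 \<le> n"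
    and "ordered_tree le S n x" "fat_o le G S \<beta> = enat d"
  shows "\<exists>m. N_inf G \<beta> n x = enat m \<and> real m \<le> (2 * exp 1 * real n / \<beta>) ^ d"
proof -
  define k where "k = nat \<lfloor>2 / \<beta>\<rfloor>"
  let ?F = "(\<lambda>g a. real (quantize \<beta> (g a))) ` G"
  have vals: "\<forall>f\<in>?F. \<forall>a. f a \<in> of_nat ` {0..k}"
    using assms(3,4) quantize_le unfolding k_def by fastforce
  have bounded_below: "\<forall>g\<in>G. \<forall>a. -1 \<le> g a" using assms(3) by simp
  have "\<not> shatters_ordered_tree le S ?F 2 (Suc d)"
    using fat_o_eq_imp_not_shatters[OF assms(7)] shatters_o_quantize[OF assms(4) bounded_below]
    unfolding shatters_ordered_tree_def by blast
  then have "has_seq_cover ?F (1/2) n x (sauer_sum k (Suc d) n)"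
    by (rule has_seq_cover_sauer_sum[OF assms(1,2,6) vals])
  then have "has_seq_cover G \<beta> n x (sauer_sum k (Suc d) n)"
    by (rule has_seq_cover_dequantize[OF assms(4) bounded_below])
  then obtain m where m: "N_inf G \<beta> n x = enat m" "m \<le> sauer_sum k (Suc d) n"
    using N_inf_le_if_has_seq_cover by blast
  have "real (sauer_sum k (Suc d) n) \<le> (2 * exp 1 * real n / \<beta>) ^ d"
  proof (cases "d = 0")
    case False
    then have "\<beta> \<le> 2"
      using fat_o_eq_0_if_scale_gt_2[OF assms(3), of \<beta> le S] assms(7) by (force simp: zero_enat_def)
    then show ?thesis unfolding k_def using sauer_sum_le_scale_power assms(4,5) by blast
  qed (simp add: sauer_sum_def)
  then show ?thesis using m by (meson of_nat_le_iff order.trans)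
qed

theorem theorem4:
  fixes le :: "'a \<Rightarrow> 'a \<Rightarrow> bool"
  assumes "reflp le" and "transp le"
  shows
   "(\<forall>(F :: ('a \<Rightarrow> real) set) (k :: nat) (d :: nat) (n :: nat) x.
       k \<ge> 1 \<longrightarrow> (\<forall>f\<in>F. \<forall>a. f a \<in> of_nat ` {0..k}) \<longrightarrow>
       fat_o le F UNIV 2 = enat d \<longrightarrow> n > d \<longrightarrow> ordered_tree le UNIV n x \<longrightarrow>
       N_inf F (1/2) n x \<le> enat (\<Sum>i=0..d. (n choose i) * k ^ i))
    \<and>
    (\<forall>(G :: ('a \<Rightarrow> real) set) (\<beta> :: real) (n :: nat) x (d :: nat).
       (\<forall>g\<in>G. \<forall>a. g a \<in> {-1..1}) \<longrightarrow> \<beta> > 0 \<longrightarrow> n \<ge> 1 \<longrightarrow>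
       ordered_tree le UNIV n x \<longrightarrow> fat_o le G UNIV \<beta> = enat d \<longrightarrow>
       (\<exists>m. N_inf G \<beta> n x = enat m \<and> real m \<le> (2 * exp 1 * real n / \<beta>) ^ d))"
proof (intro conjI allI impI)
  fix F :: "('a \<Rightarrow> real) set" and k d n :: nat and x
  assume "\<forall>f\<in>F. \<forall>a. f a \<in> of_nat ` {0..k}" "fat_o le F UNIV 2 = enat d"
    "ordered_tree le UNIV n x"
  then obtain m where "N_inf F (1/2) n x = enat m" "m \<le> sauer_sum k (Suc d) n"
    using N_inf_le_sauer_sum[OF assms] by blast
  moreover have "sauer_sum k (Suc d) n = (\<Sum>i=0..d. (n choose i) * k ^ i)"
    unfolding sauer_sum_def by (simp add: lessThan_Suc_atMost atLeast0AtMost)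
  ultimately show "N_inf F (1/2) n x \<le> enat (\<Sum>i=0..d. (n choose i) * k ^ i)" by simp
next
  fix G :: "('a \<Rightarrow> real) set" and \<beta> :: real and n d :: nat and x
  assume "\<forall>g\<in>G. \<forall>a. g a \<in> {-1..1}" "\<beta> > 0" "n \<ge> 1" "ordered_tree le UNIV n x"
    "fat_o le G UNIV \<beta> = enat d"
  then show "\<exists>m. N_inf G \<beta> n x = enat m \<and> real m \<le> (2 * exp 1 * real n / \<beta>) ^ d"
    using N_inf_le_fat_o_power[OF assms] by blast
qed

end
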